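(* Let $T$ be a tree, $T'$ a subtree of $T$, and let $D$ be a partial decision tree for $T$ which contains no query to a vertex of $T'$ but contains at least one query to a vertex of $N_T(V(T'))$. Let $Q$ be the set of all queries in $D$ to vertices of $N_T(V(T'))$. Then $D\langle Q\rangle$ is a path in $D$.
   Context: A query to a vertex $v$ of $T$ (with hidden target $x$) returns either that $v=x$ or the connected component of $T-v$ containing $x$. A decision tree for $T$ is defined recursively: a rooted tree whose root is a vertex $v$ of $T$ and whose root subtrees are decision trees for the connected components of $T-v$, one per component. A partial decision tree for $T$ is a subtree of some decision tree $D$ for $T$ that contains the root of $D$. $N_T(S)$ denotes the set of vertices outside $S$ adjacent to some vertex of $S$. For a rooted tree $D$ and a vertex set $Q$, $D\langle Q\rangle$ is the minimal connected subtree of $D$ containing $Q$. *)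

theory Defs
  imports Main
begin

text \<open>Graphs: a vertex set V and a symmetric edge relation E (set of ordered pairs).\<close>

definition connected_on :: "('a \<times> 'a) set \<Rightarrow> 'a set \<Rightarrow> bool" where
  "connected_on E S \<longleftrightarrow> (\<forall>x\<in>S. \<forall>y\<in>S. (x, y) \<in> (E \<inter> S \<times> S)\<^sup>*)"

definition has_cycle :: "('a \<times> 'a) set \<Rightarrow> bool" where
  "has_cycle E \<longleftrightarrow> (\<exists>xs. length xs \<ge> 3 \<and> distinct xs \<and>
      (\<forall>i < length xs. (xs ! i, xs ! ((i + 1) mod length xs)) \<in> E))"

definition is_tree :: "'a set \<Rightarrow> ('a \<times> 'a) set \<Rightarrow> bool" where
  "is_tree V E \<longleftrightarrow> finite V \<and> V \<noteq> {} \<and> E \<subseteq> V \<times> V \<and> sym E \<and> (\<forall>x. (x, x) \<notin> E)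
     \<and> connected_on E V \<and> \<not> has_cycle E"

definition is_subtree_vset :: "'a set \<Rightarrow> ('a \<times> 'a) set \<Rightarrow> 'a set \<Rightarrow> bool" where
  "is_subtree_vset V E U \<longleftrightarrow> U \<subseteq> V \<and> U \<noteq> {} \<and> connected_on E U"

definition nbhd :: "'a set \<Rightarrow> ('a \<times> 'a) set \<Rightarrow> 'a set \<Rightarrow> 'a set" where
  "nbhd V E S = {y \<in> V - S. \<exists>x\<in>S. (x, y) \<in> E}"

definition comps_minus :: "('a \<times> 'a) set \<Rightarrow> 'a set \<Rightarrow> 'a \<Rightarrow> 'a set set" where
  "comps_minus E S v = (\<lambda>x. {y \<in> S - {v}. (x, y) \<in> (E \<inter> (S - {v}) \<times> (S - {v}))\<^sup>*}) ` (S - {v})"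

datatype 'a rtree = Node 'a "'a rtree list"

fun root :: "'a rtree \<Rightarrow> 'a" where
  "root (Node v ts) = v"

fun rlabels :: "'a rtree \<Rightarrow> 'a set" where
  "rlabels (Node v ts) = insert v (\<Union> (set (map rlabels ts)))"

fun dedges :: "'a rtree \<Rightarrow> ('a \<times> 'a) set" where
  "dedges (Node v ts) = {(v, root t) | t. t \<in> set ts} \<union> \<Union> (set (map dedges ts))"

definition uedges :: "'a rtree \<Rightarrow> ('a \<times> 'a) set" where
  "uedges D = dedges D \<union> (dedges D)\<inverse>"

inductive is_dtree :: "('a \<times> 'a) set \<Rightarrow> 'a set \<Rightarrow> 'a rtree \<Rightarrow> bool" for E where
  "v \<in> S \<Longrightarrow> distinct Cs \<Longrightarrow> set Cs = comps_minus E S v \<Longrightarrow> list_all2 (is_dtree E) Cs ts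
    \<Longrightarrow> is_dtree E S (Node v ts)"

text \<open>A partial decision tree, given as the node set P of a subtree of D containing
  the root (nodes of a decision tree are identified with their labels, which are
  pairwise distinct): P contains the root and is closed under taking parents.\<close>
definition is_partial_dtree_of :: "'a rtree \<Rightarrow> 'a set \<Rightarrow> bool" where
  "is_partial_dtree_of D P \<longleftrightarrow> P \<subseteq> rlabels D \<and> root D \<in> P \<and>
     (\<forall>a b. (a, b) \<in> dedges D \<longrightarrow> b \<in> P \<longrightarrow> a \<in> P)"

definition dspan :: "'a rtree \<Rightarrow> 'a set \<Rightarrow> 'a set" where
  "dspan D Q = \<Inter> {X. Q \<subseteq> X \<and> X \<subseteq> rlabels D \<and> connected_on (uedges D) X}"

definition is_path_on :: "('a \<times> 'a) set \<Rightarrow> 'a set \<Rightarrow> bool" where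
  "is_path_on E X \<longleftrightarrow> (\<exists>xs. distinct xs \<and> set xs = X \<and>
      (\<forall>i. i + 1 < length xs \<longrightarrow> (xs ! i, xs ! (i + 1)) \<in> E))"

end

theory Submission
  imports Defs
begin

(* Every proper ancestor of a query q in Q is again a query of D (P is closed under
   taking parents), so it lies outside U. Descending from the root, such a vertex v
   leaves the connected set U, together with all its neighbours other than v, inside
   one component of the current vertex set minus v, i.e. inside one root subtree.
   Hence any two elements of Q are comparable in the ancestor order of D. The finite
   chain Q has a highest element a and a lowest element b, and D<Q> is the segment
   of the branch from a down to b, which is a path. *)

definition between :: "('a \<times> 'a) set \<Rightarrow> 'a \<Rightarrow> 'a \<Rightarrow> 'a set" where
  "between r a b = {z. (a, z) \<in> r\<^sup>* \<and> (z, b) \<in> r\<^sup>*}"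

lemma rtrancl_through_unique_pred:
  assumes "single_valued (r\<inverse>)" "(z, x) \<in> r\<^sup>*" "(y, x) \<in> r"
  shows "x = z \<or> (z, y) \<in> r\<^sup>*"
  using assms(2)
proof (cases rule: rtranclE)
  case (step p)
  with assms(1,3) have "p = y" by (meson converseI single_valuedD)
  with step show ?thesis by simp
qed simp

lemma between_refl:
  assumes "acyclic r"
  shows "between r a a = {a}"
  using assms unfolding between_def acyclic_def
  by (auto simp: rtrancl_eq_or_trancl dest: trancl_trans)

lemma between_snoc:
  assumes "single_valued (r\<inverse>)" "(a, b) \<in> r\<^sup>*" "(b, c) \<in> r"
  shows "between r a c = insert c (between r a b)"
  using assms rtrancl_through_unique_pred[OF assms(1) _ assms(3)]
  unfolding between_def by (auto intro: rtrancl_into_rtrancl)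

lemma between_successively_list:
  assumes "single_valued (r\<inverse>)" "acyclic r" "(a, b) \<in> r\<^sup>*"
  shows "\<exists>xs. xs \<noteq> [] \<and> last xs = b \<and> distinct xs \<and> set xs = between r a b
    \<and> successively (\<lambda>x y. (x, y) \<in> r) xs"
  using assms(3)
proof (induction b rule: rtrancl_induct)
  case base
  show ?case using between_refl[OF assms(2)] by (intro exI[of _ "[a]"]) simp
next
  case (step b c)
  then obtain xs where xs: "xs \<noteq> []" "last xs = b" "distinct xs" "set xs = between r a b"
    "successively (\<lambda>x y. (x, y) \<in> r) xs"
    by blast
  have "c \<notin> between r a b"
    using \<open>(b, c) \<in> r\<close> \<open>acyclic r\<close> unfolding between_def acyclic_def
    by (blast intro: rtrancl_into_trancl1)
  with xs step.hyps show ?case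
    by (intro exI[of _ "xs @ [c]"])
      (simp add: successively_append_iff between_snoc[OF assms(1)])
qed

lemma is_path_on_iff_successively:
  "is_path_on r X \<longleftrightarrow> (\<exists>xs. distinct xs \<and> set xs = X \<and> successively (\<lambda>x y. (x, y) \<in> r) xs)"
  by (simp add: is_path_on_def successively_conv_nth)

lemma is_path_on_between:
  assumes "single_valued (r\<inverse>)" "acyclic r" "(a, b) \<in> r\<^sup>*" "r \<subseteq> r'"
  shows "is_path_on r' (between r a b)"
proof -
  obtain xs where "distinct xs" "set xs = between r a b" "successively (\<lambda>x y. (x, y) \<in> r) xs"
    using between_successively_list[OF assms(1-3)] by blast
  with assms(4) show ?thesis
    unfolding is_path_on_iff_successively by (blast intro: successively_mono)
qed

lemma rtrancl_restrict_between:
  assumes "(a, z) \<in> r\<^sup>*" "(z, b) \<in> r\<^sup>*"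
  shows "(a, z) \<in> (r \<inter> between r a b \<times> between r a b)\<^sup>*"
  using assms
proof (induction z rule: rtrancl_induct)
  case (step y z)
  have "(y, b) \<in> r\<^sup>*" using step.hyps(2) step.prems by (rule converse_rtrancl_into_rtrancl)
  moreover have "(a, z) \<in> r\<^sup>*" using step.hyps(1,2) by (rule rtrancl_into_rtrancl)
  ultimately have "(y, z) \<in> r \<inter> between r a b \<times> between r a b"
    using step.hyps step.prems by (simp add: between_def)
  with step.IH[OF \<open>(y, b) \<in> r\<^sup>*\<close>] show ?case by (rule rtrancl.rtrancl_into_rtrancl)
qed simp

lemma connected_on_between: "connected_on (r \<union> r\<inverse>) (between r a b)"
proof -
  let ?B = "between r a b"
  let ?R = "(r \<union> r\<inverse>) \<inter> ?B \<times> ?B"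
  have "(a, w) \<in> ?R\<^sup>*" if "w \<in> ?B" for w
  proof -
    from that have "(a, w) \<in> r\<^sup>*" "(w, b) \<in> r\<^sup>*" by (simp_all add: between_def)
    then have "(a, w) \<in> (r \<inter> ?B \<times> ?B)\<^sup>*" by (rule rtrancl_restrict_between)
    moreover have "r \<inter> ?B \<times> ?B \<subseteq> ?R" by blast
    ultimately show ?thesis using rtrancl_mono by blast
  qed
  moreover have "sym (?R\<^sup>*)" by (intro sym_rtrancl) (auto simp: sym_def)
  ultimately show ?thesis
    unfolding connected_on_def by (meson rtrancl_trans symD)
qed

lemma rtrancl_leaves_set:
  "(p, q) \<in> R\<^sup>* \<Longrightarrow> p \<in> S \<Longrightarrow> q \<notin> S \<Longrightarrow> \<exists>x y. (x, y) \<in> R \<and> x \<in> S \<and> y \<notin> S"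
  by (induction q rule: rtrancl_induct) auto

lemma between_subset_if_connected:
  assumes "single_valued (r\<inverse>)" "acyclic r" "connected_on (r \<union> r\<inverse>) X" "a \<in> X" "b \<in> X"
  shows "between r a b \<subseteq> X"
proof
  fix z
  assume z: "z \<in> between r a b"
  show "z \<in> X"
  proof (rule ccontr)
    assume "z \<notin> X"
    let ?S = "{w. (z, w) \<in> r\<^sup>*}"
    have "b \<in> ?S" using z unfolding between_def by simp
    have "a \<notin> ?S"
    proof
      assume "a \<in> ?S"
      with z have "z \<in> between r a a" unfolding between_def by simp
      with \<open>z \<notin> X\<close> \<open>a \<in> X\<close> show False using between_refl[OF assms(2)] by simp
    qed
    have "(b, a) \<in> ((r \<union> r\<inverse>) \<inter> X \<times> X)\<^sup>*"
      using assms(3-5) unfolding connected_on_def by blast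
    from rtrancl_leaves_set[OF this \<open>b \<in> ?S\<close> \<open>a \<notin> ?S\<close>]
    obtain x y where xy: "(x, y) \<in> (r \<union> r\<inverse>) \<inter> X \<times> X" "x \<in> ?S" "y \<notin> ?S"
      by blast
    then have "(z, x) \<in> r\<^sup>*" "(z, y) \<notin> r\<^sup>*" by simp_all
    then have "(x, y) \<notin> r" by (meson rtrancl_into_rtrancl)
    with xy(1) have "(y, x) \<in> r" by blast
    \<comment> \<open>An edge leaving the descendants of z enters x from its unique parent, so x = z.\<close>
    with \<open>(z, x) \<in> r\<^sup>*\<close> \<open>(z, y) \<notin> r\<^sup>*\<close> have "x = z"
      using rtrancl_through_unique_pred[OF assms(1)] by blast
    with xy(1) \<open>z \<notin> X\<close> show False by blast
  qed
qed

lemma finite_chain_has_least: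
  assumes "finite Q" "Q \<noteq> {}" "\<And>x y. x \<in> Q \<Longrightarrow> y \<in> Q \<Longrightarrow> (x, y) \<in> r\<^sup>* \<or> (y, x) \<in> r\<^sup>*"
  shows "\<exists>a\<in>Q. \<forall>q\<in>Q. (a, q) \<in> r\<^sup>*"
  using assms
proof (induction Q rule: finite_ne_induct)
  case (insert x F)
  have "\<exists>a\<in>F. \<forall>q\<in>F. (a, q) \<in> r\<^sup>*"
    using insert.prems by (intro insert.IH) simp
  then obtain a where a: "a \<in> F" "\<forall>q\<in>F. (a, q) \<in> r\<^sup>*" ..
  show ?case
  proof (cases "(x, a) \<in> r\<^sup>*")
    case True
    with a show ?thesis by (blast intro: rtrancl_trans)
  next
    case False
    with insert.prems a have "(a, x) \<in> r\<^sup>*" by blast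
    with a show ?thesis by blast
  qed
qed simp

lemma finite_chain_has_greatest:
  assumes "finite Q" "Q \<noteq> {}" "\<And>x y. x \<in> Q \<Longrightarrow> y \<in> Q \<Longrightarrow> (x, y) \<in> r\<^sup>* \<or> (y, x) \<in> r\<^sup>*"
  shows "\<exists>b\<in>Q. \<forall>q\<in>Q. (q, b) \<in> r\<^sup>*"
proof -
  have "\<exists>b\<in>Q. \<forall>q\<in>Q. (b, q) \<in> (r\<inverse>)\<^sup>*"
    using assms(1,2)
  proof (rule finite_chain_has_least)
    fix x y
    assume "x \<in> Q" "y \<in> Q"
    then show "(x, y) \<in> (r\<inverse>)\<^sup>* \<or> (y, x) \<in> (r\<inverse>)\<^sup>*"
      using assms(3) by (simp add: rtrancl_converse)
  qed
  then show ?thesis by (simp add: rtrancl_converse)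
qed

definition component :: "('a \<times> 'a) set \<Rightarrow> 'a set \<Rightarrow> 'a \<Rightarrow> 'a set" where
  "component E A x = {y \<in> A. (x, y) \<in> (E \<inter> A \<times> A)\<^sup>*}"

lemma comps_minus_eq_component_image:
  "comps_minus E S v = component E (S - {v}) ` (S - {v})"
  by (simp add: comps_minus_def component_def)

lemma component_subset: "component E A x \<subseteq> A"
  by (simp add: component_def)

lemma self_in_component: "x \<in> A \<Longrightarrow> x \<in> component E A x"
  by (simp add: component_def)

lemma component_edge_closed:
  assumes "y \<in> component E A x" "(y, z) \<in> E" "z \<in> A"
  shows "z \<in> component E A x"
  using assms unfolding component_def by (blast intro: rtrancl_into_rtrancl)

lemma component_eq_if_common_element:
  assumes "sym E" "z \<in> component E A x" "z \<in> component E A x'"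
  shows "component E A x = component E A x'"
proof -
  have "sym ((E \<inter> A \<times> A)\<^sup>*)"
    using assms(1) by (intro sym_rtrancl) (auto simp: sym_def)
  then have "(x, x') \<in> (E \<inter> A \<times> A)\<^sup>*" "(x', x) \<in> (E \<inter> A \<times> A)\<^sup>*"
    using assms(2,3) unfolding component_def by (blast dest: symD intro: rtrancl_trans)+
  then show ?thesis
    unfolding component_def by (blast intro: rtrancl_trans)
qed

lemma subset_component_if_adjacent:
  assumes "sym E" "connected_on E U" "U \<subseteq> A" "q \<in> A" "u \<in> U" "(u, q) \<in> E"
  shows "U \<subseteq> component E A q"
proof
  fix w
  assume "w \<in> U"
  have "u \<in> component E A q"
    using assms self_in_component component_edge_closed by (metis subsetD symD)
  moreover have "(u, w) \<in> (E \<inter> A \<times> A)\<^sup>*"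
    using assms(2,3,5) \<open>w \<in> U\<close> unfolding connected_on_def
    by (meson Int_mono order_refl rtrancl_mono subsetD Sigma_mono)
  ultimately show "w \<in> component E A q"
    using assms(3) \<open>w \<in> U\<close> unfolding component_def by (blast intro: rtrancl_trans)
qed

lemma Union_comps_minus: "\<Union> (comps_minus E S v) = S - {v}"
proof
  show "\<Union> (comps_minus E S v) \<subseteq> S - {v}"
    unfolding comps_minus_eq_component_image by (intro UN_least component_subset)
  show "S - {v} \<subseteq> \<Union> (comps_minus E S v)"
  proof
    fix x
    assume "x \<in> S - {v}"
    moreover from this have "x \<in> component E (S - {v}) x" by (rule self_in_component)
    ultimately show "x \<in> \<Union> (comps_minus E S v)"
      unfolding comps_minus_eq_component_image by blast
  qed
qed

fun distinct_labels :: "'a rtree \<Rightarrow> bool" where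
  "distinct_labels (Node v ts) \<longleftrightarrow>
     (\<forall>t\<in>set ts. v \<notin> rlabels t \<and> distinct_labels t) \<and>
     (\<forall>t\<in>set ts. \<forall>t'\<in>set ts. t \<noteq> t' \<longrightarrow> rlabels t \<inter> rlabels t' = {})"

lemma root_in_rlabels: "root t \<in> rlabels t"
  by (cases t) simp

lemma dedges_subset_rlabels: "dedges t \<subseteq> rlabels t \<times> rlabels t"
  by (induction t) (fastforce simp: root_in_rlabels)

lemma rtrancl_dedges_rlabels: "(x, y) \<in> (dedges t)\<^sup>* \<Longrightarrow> x \<in> rlabels t \<Longrightarrow> y \<in> rlabels t"
  by (induction rule: rtrancl_induct) (use dedges_subset_rlabels in blast)+

lemma root_rtrancl_dedges: "x \<in> rlabels t \<Longrightarrow> (root t, x) \<in> (dedges t)\<^sup>*"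
proof (induction t)
  case (Node v ts)
  show ?case
  proof (cases "x = v")
    case False
    with Node.prems obtain t where t: "t \<in> set ts" "x \<in> rlabels t" by auto
    then have "(root t, x) \<in> (dedges (Node v ts))\<^sup>*"
      using Node.IH rtrancl_mono[of "dedges t" "dedges (Node v ts)"] by auto
    moreover have "(v, root t) \<in> dedges (Node v ts)" using t by auto
    ultimately show ?thesis by (simp add: converse_rtrancl_into_rtrancl)
  qed simp
qed

lemma dedges_Node_target: "(a, b) \<in> dedges (Node v ts) \<Longrightarrow> \<exists>t\<in>set ts. b \<in> rlabels t"
  using root_in_rlabels dedges_subset_rlabels by fastforce

lemma root_not_dedges_target:
  assumes "distinct_labels t"
  shows "(a, root t) \<notin> dedges t"
proof (cases t)
  case (Node v ts)
  with assms show ?thesis using dedges_Node_target[of a v v ts] by auto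
qed

lemma dedges_into_subtree:
  assumes "distinct_labels (Node v ts)" "t \<in> set ts" "(a, b) \<in> dedges (Node v ts)" "b \<in> rlabels t"
  shows "a = v \<and> b = root t \<or> (a, b) \<in> dedges t"
  using assms root_in_rlabels dedges_subset_rlabels by fastforce

lemma trancl_dedges_into_subtree:
  assumes "distinct_labels (Node v ts)" "t \<in> set ts"
  shows "(x, y) \<in> (dedges (Node v ts))\<^sup>+ \<Longrightarrow> y \<in> rlabels t \<Longrightarrow> x = v \<or> (x, y) \<in> (dedges t)\<^sup>+"
proof (induction y rule: trancl_induct)
  case (base y)
  then show ?case using dedges_into_subtree[OF assms] by blast
next
  case (step y z)
  from dedges_into_subtree[OF assms step.hyps(2) step.prems] show ?case
  proof
    assume "y = v \<and> z = root t"
    moreover have "(x, v) \<notin> (dedges (Node v ts))\<^sup>+"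
      using root_not_dedges_target[OF assms(1)] by (auto elim: tranclE)
    ultimately show ?case using step.hyps(1) by simp
  next
    assume "(y, z) \<in> dedges t"
    moreover from this have "x = v \<or> (x, y) \<in> (dedges t)\<^sup>+"
      using step.IH dedges_subset_rlabels by blast
    ultimately show ?case by (meson trancl.trancl_into_trancl)
  qed
qed

lemma single_valued_converse_dedges: "distinct_labels t \<Longrightarrow> single_valued ((dedges t)\<inverse>)"
proof (induction t)
  case (Node v ts)
  show ?case
  proof (rule single_valuedI)
    fix b a a'
    assume "(b, a) \<in> (dedges (Node v ts))\<inverse>" "(b, a') \<in> (dedges (Node v ts))\<inverse>"
    then have e: "(a, b) \<in> dedges (Node v ts)" "(a', b) \<in> dedges (Node v ts)" by simp_all
    obtain t where t: "t \<in> set ts" "b \<in> rlabels t" using dedges_Node_target[OF e(1)] by blast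
    with Node.prems have "distinct_labels t" by simp
    with Node.IH t(1) have "single_valued ((dedges t)\<inverse>)" by blast
    with dedges_into_subtree[OF Node.prems t(1) e(1) t(2)]
      dedges_into_subtree[OF Node.prems t(1) e(2) t(2)]
      root_not_dedges_target[OF \<open>distinct_labels t\<close>]
    show "a = a'" by (metis converseI single_valuedD)
  qed
qed

lemma acyclic_dedges: "distinct_labels t \<Longrightarrow> acyclic (dedges t)"
proof (induction t)
  case (Node v ts)
  show ?case
  proof (rule acyclicI, intro allI notI)
    fix x
    assume cycle: "(x, x) \<in> (dedges (Node v ts))\<^sup>+"
    then obtain a where "(a, x) \<in> dedges (Node v ts)" by (blast elim: tranclE)
    then have "\<exists>t\<in>set ts. x \<in> rlabels t" by (rule dedges_Node_target)
    then obtain t where t: "t \<in> set ts" "x \<in> rlabels t" ..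
    with Node have "v \<notin> rlabels t" "acyclic (dedges t)" by simp_all
    with trancl_dedges_into_subtree[OF Node.prems t(1) cycle t(2)] t(2) show False
      by (auto simp: acyclic_def)
  qed
qed

lemma rlabels_dtree: "is_dtree E S D \<Longrightarrow> rlabels D = S"
proof (induction rule: is_dtree.induct)
  case (1 v S Cs ts)
  have "Cs = map rlabels ts" using 1(4) by (induction rule: list_all2_induct) auto
  then have "rlabels (Node v ts) = insert v (\<Union> (set Cs))" by simp
  also have "\<dots> = insert v (S - {v})" by (simp only: 1(3) Union_comps_minus)
  finally show ?case using 1(1) by (simp add: insert_absorb)
qed

lemma is_dtree_NodeD:
  assumes "is_dtree E S (Node v ts)"
  shows "v \<in> S" "distinct (map rlabels ts)" "rlabels ` set ts = comps_minus E S v"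
    "\<And>t. t \<in> set ts \<Longrightarrow> is_dtree E (rlabels t) t"
proof -
  from assms obtain Cs where Cs: "v \<in> S" "distinct Cs" "set Cs = comps_minus E S v"
    "list_all2 (is_dtree E) Cs ts"
    by (cases rule: is_dtree.cases) auto
  moreover from Cs(4) have "Cs = map rlabels ts"
    by (induction rule: list_all2_induct) (auto simp: rlabels_dtree)
  ultimately show "v \<in> S" "distinct (map rlabels ts)" "rlabels ` set ts = comps_minus E S v"
    "\<And>t. t \<in> set ts \<Longrightarrow> is_dtree E (rlabels t) t"
    by (auto simp: list_all2_map1 list_all2_same)
qed

lemma distinct_labels_dtree: "sym E \<Longrightarrow> is_dtree E S D \<Longrightarrow> distinct_labels D"
proof (induction D arbitrary: S)
  case (Node v ts)
  note children = is_dtree_NodeD[OF Node.prems(2)]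
  have is_component: "\<exists>x. rlabels t = component E (S - {v}) x" if "t \<in> set ts" for t
  proof -
    have "rlabels t \<in> comps_minus E S v" using children(3) that by blast
    then show ?thesis unfolding comps_minus_eq_component_image by blast
  qed
  have "v \<notin> rlabels t" if "t \<in> set ts" for t
    using is_component[OF that] component_subset[of E "S - {v}"] by blast
  moreover have "distinct_labels t" if "t \<in> set ts" for t
    using Node.IH[OF that Node.prems(1) children(4)[OF that]] .
  moreover have "rlabels t \<inter> rlabels t' = {}"
    if t: "t \<in> set ts" and t': "t' \<in> set ts" and "t \<noteq> t'" for t t'
  proof -
    have "rlabels t \<noteq> rlabels t'"
      using children(2) t t' \<open>t \<noteq> t'\<close> by (auto simp: distinct_map inj_on_def)
    moreover obtain x x' where
      "rlabels t = component E (S - {v}) x" "rlabels t' = component E (S - {v}) x'"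
      using is_component[OF t] is_component[OF t'] by blast
    ultimately show ?thesis
      using component_eq_if_common_element[OF Node.prems(1)] by (metis disjoint_iff)
  qed
  ultimately show ?case by simp
qed

lemma partial_dtree_ancestor_closed:
  assumes "is_partial_dtree_of D P" "(a, q) \<in> (dedges D)\<^sup>*" "q \<in> P"
  shows "a \<in> P"
  using assms(2,3)
proof (induction rule: converse_rtrancl_induct)
  case (step a a')
  with assms(1) show ?case unfolding is_partial_dtree_of_def by blast
qed

lemma dtree_neighbours_comparable:
  assumes "sym E" "connected_on E U"
    and "is_dtree E S D" "U \<subseteq> S" "q1 \<in> S" "q2 \<in> S"
    and "u1 \<in> U" "(u1, q1) \<in> E" "u2 \<in> U" "(u2, q2) \<in> E"
    and "\<forall>a. (a, q1) \<in> (dedges D)\<^sup>+ \<longrightarrow> a \<notin> U"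
  shows "(q1, q2) \<in> (dedges D)\<^sup>* \<or> (q2, q1) \<in> (dedges D)\<^sup>*"
  using assms(3-)
proof (induction D arbitrary: S rule: rtree.induct)
  case (Node v ts)
  let ?r = "dedges (Node v ts)"
  have labels: "rlabels (Node v ts) = S" using Node.prems(1) by (rule rlabels_dtree)
  show ?case
  proof (cases "q1 = v \<or> q2 = v")
    case True
    then show ?thesis
      using root_rtrancl_dedges[of _ "Node v ts"] labels Node.prems(3,4) by auto
  next
    case False
    have "(v, q1) \<in> ?r\<^sup>+"
      using root_rtrancl_dedges[of q1 "Node v ts"] labels Node.prems(3) False
      by (auto simp: rtrancl_eq_or_trancl)
    with Node.prems(9) have "v \<notin> U" by blast
    let ?A = "S - {v}"
    let ?C = "component E ?A q1"
    have "U \<subseteq> ?A" using Node.prems(2) \<open>v \<notin> U\<close> by blast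
    have "q1 \<in> ?A" "q2 \<in> ?A" using Node.prems(3,4) False by auto
    have "U \<subseteq> ?C"
      using subset_component_if_adjacent[OF assms(1,2) \<open>U \<subseteq> ?A\<close> \<open>q1 \<in> ?A\<close> Node.prems(5,6)] .
    have "q2 \<in> ?C"
      using component_edge_closed[of u2 E ?A q1 q2] \<open>U \<subseteq> ?C\<close> Node.prems(7,8) \<open>q2 \<in> ?A\<close>
      by blast
    have "q1 \<in> ?C" using \<open>q1 \<in> ?A\<close> by (rule self_in_component)
    have "?C \<in> rlabels ` set ts"
      using is_dtree_NodeD(3)[OF Node.prems(1)] \<open>q1 \<in> ?A\<close>
      by (simp add: comps_minus_eq_component_image)
    then obtain t where t: "t \<in> set ts" "rlabels t = ?C" by blast
    have sub: "dedges t \<subseteq> ?r" using t(1) by auto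
    have "(q1, q2) \<in> (dedges t)\<^sup>* \<or> (q2, q1) \<in> (dedges t)\<^sup>*"
    proof (rule Node.IH[OF t(1)])
      show "is_dtree E ?C t" using is_dtree_NodeD(4)[OF Node.prems(1) t(1)] t(2) by simp
      show "\<forall>a. (a, q1) \<in> (dedges t)\<^sup>+ \<longrightarrow> a \<notin> U"
        using Node.prems(9) trancl_mono[OF _ sub] by blast
    qed fact+
    then show ?thesis using rtrancl_mono[OF sub] by blast
  qed
qed

lemma dspan_eq_between:
  assumes "distinct_labels D" "a \<in> Q" "b \<in> Q" "Q \<subseteq> rlabels D" "Q \<subseteq> between (dedges D) a b"
  shows "dspan D Q = between (dedges D) a b"
proof -
  let ?B = "between (dedges D) a b"
  let ?F = "{X. Q \<subseteq> X \<and> X \<subseteq> rlabels D \<and> connected_on (uedges D) X}"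
  have "?B \<subseteq> rlabels D"
  proof
    fix z
    assume "z \<in> ?B"
    then have "(a, z) \<in> (dedges D)\<^sup>*" by (simp add: between_def)
    then show "z \<in> rlabels D" using assms(2,4) by (blast intro: rtrancl_dedges_rlabels)
  qed
  moreover have "connected_on (uedges D) ?B"
    unfolding uedges_def by (rule connected_on_between)
  ultimately have "?B \<in> ?F" using assms(5) by blast
  moreover have "?B \<subseteq> X" if "X \<in> ?F" for X
    using between_subset_if_connected[OF single_valued_converse_dedges[OF assms(1)]
        acyclic_dedges[OF assms(1)]] that assms(2,3)
    unfolding uedges_def by blast
  ultimately show ?thesis
    unfolding dspan_def by (intro equalityI Inter_lower Inter_greatest)
qed

lemma dspan_of_chain_is_path:
  assumes "distinct_labels D" "finite Q" "Q \<noteq> {}" "Q \<subseteq> rlabels D"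
    and "\<And>x y. x \<in> Q \<Longrightarrow> y \<in> Q \<Longrightarrow> (x, y) \<in> (dedges D)\<^sup>* \<or> (y, x) \<in> (dedges D)\<^sup>*"
  shows "is_path_on (uedges D) (dspan D Q)"
proof -
  let ?r = "dedges D"
  obtain a where a: "a \<in> Q" "\<forall>q\<in>Q. (a, q) \<in> ?r\<^sup>*"
    using finite_chain_has_least[OF assms(2,3,5)] by blast
  obtain b where b: "b \<in> Q" "\<forall>q\<in>Q. (q, b) \<in> ?r\<^sup>*"
    using finite_chain_has_greatest[OF assms(2,3,5)] by blast
  have "Q \<subseteq> between ?r a b" using a(2) b(2) unfolding between_def by blast
  with assms(1,4) a(1) b(1) have "dspan D Q = between ?r a b" by (intro dspan_eq_between)
  moreover have "is_path_on (uedges D) (between ?r a b)"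
  proof (rule is_path_on_between)
    show "single_valued (?r\<inverse>)" using assms(1) by (rule single_valued_converse_dedges)
    show "acyclic ?r" using assms(1) by (rule acyclic_dedges)
    show "(a, b) \<in> ?r\<^sup>*" using a(2) b(1) by blast
    show "?r \<subseteq> uedges D" by (simp add: uedges_def)
  qed
  ultimately show ?thesis by simp
qed

theorem mainTheorem3:
  fixes V :: "'a set" and E :: "('a \<times> 'a) set" and U :: "'a set"
    and D :: "'a rtree" and P :: "'a set"
  assumes "is_tree V E"
    and "is_subtree_vset V E U"
    and "is_dtree E V D"
    and "is_partial_dtree_of D P"
    and "P \<inter> U = {}"
    and "P \<inter> nbhd V E U \<noteq> {}"
  shows "is_path_on (uedges D) (dspan D (P \<inter> nbhd V E U))"
proof -
  let ?Q = "P \<inter> nbhd V E U"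
  have "finite V" "sym E" using assms(1) unfolding is_tree_def by auto
  have "U \<subseteq> V" "connected_on E U" using assms(2) unfolding is_subtree_vset_def by auto
  have "rlabels D = V" using assms(3) by (rule rlabels_dtree)
  have "?Q \<subseteq> V" by (auto simp: nbhd_def)
  have comparable: "(q1, q2) \<in> (dedges D)\<^sup>* \<or> (q2, q1) \<in> (dedges D)\<^sup>*"
    if q: "q1 \<in> ?Q" "q2 \<in> ?Q" for q1 q2
  proof -
    obtain u1 u2 where "u1 \<in> U" "(u1, q1) \<in> E" "u2 \<in> U" "(u2, q2) \<in> E"
      using q unfolding nbhd_def by blast
    moreover have "\<forall>a. (a, q1) \<in> (dedges D)\<^sup>+ \<longrightarrow> a \<notin> U"
      using partial_dtree_ancestor_closed[OF assms(4) trancl_into_rtrancl] q(1) assms(5) by blast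
    ultimately show ?thesis
      using dtree_neighbours_comparable[OF \<open>sym E\<close> \<open>connected_on E U\<close> assms(3) \<open>U \<subseteq> V\<close>]
        q \<open>?Q \<subseteq> V\<close> by blast
  qed
  show ?thesis
  proof (rule dspan_of_chain_is_path[OF _ _ assms(6) _ comparable])
    show "distinct_labels D" using \<open>sym E\<close> assms(3) by (rule distinct_labels_dtree)
    show "finite ?Q" using \<open>?Q \<subseteq> V\<close> \<open>finite V\<close> by (rule finite_subset)
    show "?Q \<subseteq> rlabels D" using \<open>?Q \<subseteq> V\<close> by (simp only: \<open>rlabels D = V\<close>)
  qed
qed

end
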